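(* Let $T$ be a string of length $N$, and let $\mathsf{TtoG}(T)$, $T_0, T_1, \ldots$, $B_h$, $L_h$, $R_h$ and $\mathit{PSeq}$ be as defined in the context. For any substring $w$ of $T$, the sequence $\mathit{PSeq}(w)$ consists of $O(\lg N)$ blocks of letters (maximal runs of a single letter). Moreover, for every position $i$, $w$ occurs at position $i$ in $T$ if and only if $\mathit{PSeq}(w)$ occurs at position $i$.
   Context: Construction $\mathsf{TtoG}$: Let $T_0$ be obtained from $T$ by replacing each character by a letter deriving it (its rank among the characters of $T$). For $h=0,1,2,\ldots$ until $|T_h|=1$: if $h$ is even (block compression), let $B_h$ be the set of letters $c$ such that $T_h$ contains a maximal run $c^d$ with $d\ge 2$; replace every maximal run $c^d$ with $d \ge 2$ by a fresh letter $c'$ with rule $c' \to c^d$ (equal pairs $(c,d)$ receive the same fresh letter), giving $T_{h+1}$. If $h$ is odd (pair compression; $T_h$ then has no two equal adjacent letters), compute a partition $(L_h,R_h)$ of the set of letters occurring in $T_h$ as follows: process letters $c$ in increasing order, adding $c$ to $L_h$ if the number of occurrences in $T_h$ of length-2 substrings consisting of $c$ and a letter already placed in $R_h$ (in either order) is at least the number of such occurrences with a letter already in $L_h$, and adding $c$ to $R_h$ otherwise; at the end, if the number of occurrences of pairs in $L_hR_h$ is smaller than that of pairs in $R_hL_h$, swap $L_h$ and $R_h$. Then replace every occurrence of a pair $ab$ with $a\in L_h$, $b\in R_h$ by a fresh letter $c$ with rule $c\to ab$ (equal pairs receive the same letter), giving $T_{h+1}$. The letters with their rules form a run-length straight-line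 program $\mathsf{TtoG}(T)$ generating $T$. Its derivation tree has nodes labeled by letters (terminal leaves removed); each node derives an interval of positions of $T$. A chain is a sequence of nodes $v_1\cdots v_m$ such that the interval of $v_{k+1}$ begins right after the interval of $v_k$ ends; its label is the sequence of the nodes' labels. A sequence $p$ of letters occurs at position $i$ if some chain labeled $p$ begins at position $i$ of $T$. Popped sequence: for $w = T[b..e]$ let $w_0 = T_0[b..e]$. For increasing $h$: if $h$ is even, pop out the leftmost and the rightmost maximal run of $w_h$ if its letter is in $B_h$, then apply level-$h$ block compression (same letter assignment as for $T_h$) to the rest to get $w_{h+1}$; if $h$ is odd, pop out the leftmost letter of $w_h$ if it is in $R_h$ and the rightmost letter if it is in $L_h$, then replace pairs in $L_hR_h$ by their level-$h$ letters to get $w_{h+1}$. Repeat until the string is empty. $\mathit{PSeq}(w)$ is the concatenation of the letters/runs popped from the left in the order popped, followed by those popped from the right in reverse order of popping; it satisfies that the concatenation of strings derived by its letters equals $w$. *)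

theory Defs
  imports Complex_Main
begin

text \<open>A letter is identified by its rule: a terminal letter (rank of a character of T),
  a run letter c' -> c^d, or a pair letter c -> a b.  Equal (c,d) / equal pairs get the
  same letter, as required.\<close>
datatype sym = Term nat | Run sym nat | Pair sym sym

fun slen :: "sym \<Rightarrow> nat" where
  "slen (Term k) = 1"
| "slen (Run c d) = d * slen c"
| "slen (Pair a b) = slen a + slen b"

fun runs :: "'b list \<Rightarrow> ('b \<times> nat) list" where
  "runs [] = []"
| "runs (x # xs) = (case runs xs of
       [] \<Rightarrow> [(x, 1)]
     | (y, n) # r \<Rightarrow> (if x = y then (y, Suc n) # r else (x, 1) # (y, n) # r))"

definition unruns :: "('b \<times> nat) list \<Rightarrow> 'b list" where
  "unruns rs = concat (map (\<lambda>(c, d). replicate d c) rs)"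

definition bc_run :: "sym \<times> nat \<Rightarrow> sym list" where
  "bc_run cd = (case cd of (c, d) \<Rightarrow> if 2 \<le> d then [Run c d] else replicate d c)"

definition bcomp :: "sym list \<Rightarrow> sym list" where
  "bcomp s = concat (map bc_run (runs s))"

definition Bset :: "sym list \<Rightarrow> sym set" where
  "Bset s = {c. \<exists>d. 2 \<le> d \<and> (c, d) \<in> set (runs s)}"

fun pcomp :: "sym set \<Rightarrow> sym set \<Rightarrow> sym list \<Rightarrow> sym list" where
  "pcomp L R (a # b # s) =
     (if a \<in> L \<and> b \<in> R then Pair a b # pcomp L R s else a # pcomp L R (b # s))"
| "pcomp L R s = s"

definition adj :: "'b list \<Rightarrow> ('b \<times> 'b) list" where
  "adj s = zip s (tl s)"

definition cnt_with :: "sym list \<Rightarrow> sym \<Rightarrow> sym set \<Rightarrow> nat" where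
  "cnt_with s c X = length (filter (\<lambda>(x, y). (x = c \<and> y \<in> X) \<or> (y = c \<and> x \<in> X)) (adj s))"

definition cnt_LR :: "sym list \<Rightarrow> sym set \<Rightarrow> sym set \<Rightarrow> nat" where
  "cnt_LR s L R = length (filter (\<lambda>(x, y). x \<in> L \<and> y \<in> R) (adj s))"

definition greedy_step :: "sym list \<Rightarrow> sym \<Rightarrow> sym set \<times> sym set \<Rightarrow> sym set \<times> sym set" where
  "greedy_step s c LR = (case LR of (L, R) \<Rightarrow>
      if cnt_with s c L \<le> cnt_with s c R then (insert c L, R) else (L, insert c R))"

text \<open>The partition (L_h, R_h); letters are processed in increasing order w.r.t. the
  letter order given by the injective ranking rk.\<close>
definition partition_lr :: "(sym \<Rightarrow> nat) \<Rightarrow> sym list \<Rightarrow> sym set \<times> sym set" where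
  "partition_lr rk s = (case fold (greedy_step s) (sort_key rk (remdups s)) ({}, {}) of
      (L, R) \<Rightarrow> if cnt_LR s L R < cnt_LR s R L then (R, L) else (L, R))"

definition char_rank :: "'a::linorder list \<Rightarrow> 'a \<Rightarrow> nat" where
  "char_rank T x = card {y \<in> set T. y < x}"

definition T0 :: "'a::linorder list \<Rightarrow> 'a list \<Rightarrow> sym list" where
  "T0 T w = map (\<lambda>x. Term (char_rank T x)) w"

primrec Tlev :: "(sym \<Rightarrow> nat) \<Rightarrow> 'a::linorder list \<Rightarrow> nat \<Rightarrow> sym list" where
  "Tlev rk T 0 = T0 T T"
| "Tlev rk T (Suc h) = (if even h then bcomp (Tlev rk T h)
     else (case partition_lr rk (Tlev rk T h) of (L, R) \<Rightarrow> pcomp L R (Tlev rk T h)))"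

definition Lset :: "(sym \<Rightarrow> nat) \<Rightarrow> 'a::linorder list \<Rightarrow> nat \<Rightarrow> sym set" where
  "Lset rk T h = fst (partition_lr rk (Tlev rk T h))"

definition Rset :: "(sym \<Rightarrow> nat) \<Rightarrow> 'a::linorder list \<Rightarrow> nat \<Rightarrow> sym set" where
  "Rset rk T h = snd (partition_lr rk (Tlev rk T h))"

definition Bh :: "(sym \<Rightarrow> nat) \<Rightarrow> 'a::linorder list \<Rightarrow> nat \<Rightarrow> sym set" where
  "Bh rk T h = Bset (Tlev rk T h)"

definition pop_even :: "sym set \<Rightarrow> sym list \<Rightarrow> sym list \<times> sym list \<times> sym list" where
  "pop_even B w =
    (case (case runs w of
             [] \<Rightarrow> ([], [])
           | (c, d) # r \<Rightarrow> (if c \<in> B then (replicate d c, r) else ([], runs w))) of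
      (lp, rs1) \<Rightarrow>
        (case (case rev rs1 of
                 [] \<Rightarrow> ([], [])
               | (c, d) # r \<Rightarrow> (if c \<in> B then (replicate d c, rev r) else ([], rs1))) of
          (rp, rs2) \<Rightarrow> (lp, bcomp (unruns rs2), rp)))"

definition pop_odd :: "sym set \<Rightarrow> sym set \<Rightarrow> sym list \<Rightarrow> sym list \<times> sym list \<times> sym list" where
  "pop_odd L R w =
    (case (case w of [] \<Rightarrow> ([], []) | a # r \<Rightarrow> (if a \<in> R then ([a], r) else ([], w))) of
      (lp, w1) \<Rightarrow>
        (case (case rev w1 of [] \<Rightarrow> ([], [])
                 | a # r \<Rightarrow> (if a \<in> L then ([a], rev r) else ([], w1))) of
          (rp, w2) \<Rightarrow> (lp, pcomp L R w2, rp)))"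

text \<open>Run the popping process from level h for f levels; returns (left pops in order,
  right pops in reverse order of popping).  Once the string is empty, steps are no-ops.\<close>
fun pops :: "(sym \<Rightarrow> nat) \<Rightarrow> 'a::linorder list \<Rightarrow> nat \<Rightarrow> sym list \<Rightarrow> nat \<Rightarrow> sym list \<times> sym list" where
  "pops rk T h w 0 = ([], [])"
| "pops rk T h w (Suc f) =
     (case (if even h then pop_even (Bh rk T h) w else pop_odd (Lset rk T h) (Rset rk T h) w) of
        (l, m, r) \<Rightarrow> (case pops rk T (Suc h) m f of (l', r') \<Rightarrow> (l @ l', r' @ r)))"

text \<open>The number of levels 4|T|+4 is enough for the process to
  empty the string (afterwards nothing changes).\<close>
definition PSeq :: "(sym \<Rightarrow> nat) \<Rightarrow> 'a::linorder list \<Rightarrow> 'a list \<Rightarrow> sym list" where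
  "PSeq rk T w = (case pops rk T 0 (T0 T w) (4 * length T + 4) of (l, r) \<Rightarrow> l @ r)"

text \<open>Nodes as (label, start, end) with derived interval [start, end) (0-based);
  the node at position j of T_h.\<close>
definition nodes :: "(sym \<Rightarrow> nat) \<Rightarrow> 'a::linorder list \<Rightarrow> (sym \<times> nat \<times> nat) set" where
  "nodes rk T = {(Tlev rk T h ! j, st, st + slen (Tlev rk T h ! j)) | h j st.
      j < length (Tlev rk T h) \<and> st = sum_list (map slen (take j (Tlev rk T h)))}"

definition is_chain :: "(sym \<times> nat \<times> nat) list \<Rightarrow> bool" where
  "is_chain ns = (\<forall>k. Suc k < length ns \<longrightarrow> snd (snd (ns ! k)) = fst (snd (ns ! Suc k)))"

definition occurs_seq :: "(sym \<Rightarrow> nat) \<Rightarrow> 'a::linorder list \<Rightarrow> sym list \<Rightarrow> nat \<Rightarrow> bool" where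
  "occurs_seq rk T p i = (\<exists>ns. ns \<noteq> [] \<and> set ns \<subseteq> nodes rk T \<and> is_chain ns \<and>
      map fst ns = p \<and> fst (snd (hd ns)) = i)"

definition occurs_str :: "'a list \<Rightarrow> 'a list \<Rightarrow> nat \<Rightarrow> bool" where
  "occurs_str T w i = (i + length w \<le> length T \<and> take (length w) (drop i T) = w)"

end

theory Submission
  imports Defs
begin

text \<open>Popping commutes with the compression of \<open>T\<close>: once the letters at the ends of
  \<open>w\<^sub>h\<close> that could merge with letters outside \<open>w\<^sub>h\<close> are popped, the rest of
  \<open>w\<^sub>h\<close> is compressed inside \<open>T\<^sub>h\<close> exactly as on its own. Hence, at every
  occurrence of \<open>w\<close>, the popped letters together with the remaining \<open>w\<^sub>h\<close> form a
  chain of derivation tree nodes deriving \<open>w\<close>; conversely a chain labelled \<open>PSeq(w)\<close>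
  derives \<open>w\<close>, which determines the characters because ranks are injective.
  Each level pops at most one run on either side, and since the greedy partition pairs at
  least a quarter of the unequal adjacent letters, two levels shrink \<open>T\<^sub>h\<close> by a factor
  \<open>3/4\<close>. So after \<open>O(lg N)\<close> levels \<open>T\<^sub>h\<close>, and with it the remaining \<open>w\<^sub>h\<close>,
  has at most one letter, and \<open>w\<close> is used up two levels later.\<close>

section \<open>Runs and adjacent pairs\<close>

definition valid_runs :: "('b \<times> nat) list \<Rightarrow> bool" where
  "valid_runs rs \<longleftrightarrow> (\<forall>p\<in>set rs. 1 \<le> snd p) \<and> successively (\<lambda>p q. fst p \<noteq> fst q) rs"

lemma unruns_Nil [simp]: "unruns [] = []"
  by (simp add: unruns_def)

lemma unruns_Cons [simp]: "unruns ((c, d) # rs) = replicate d c @ unruns rs"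
  by (simp add: unruns_def)

lemma unruns_append [simp]: "unruns (rs @ qs) = unruns rs @ unruns qs"
  by (simp add: unruns_def)

lemma unruns_rev: "unruns (rev rs) = rev (unruns rs)"
  by (induction rs) auto

lemma valid_runs_Cons:
  "valid_runs (p # rs) \<longleftrightarrow> 1 \<le> snd p \<and> (rs \<noteq> [] \<longrightarrow> fst p \<noteq> fst (hd rs)) \<and> valid_runs rs"
  by (cases rs) (auto simp: valid_runs_def successively_Cons)

lemma valid_runs_rev [simp]: "valid_runs (rev rs) \<longleftrightarrow> valid_runs rs"
  by (auto simp: valid_runs_def elim: successively_mono)

lemma runs_correct:
  "unruns (runs s) = s \<and> valid_runs (runs s) \<and> (runs s \<noteq> [] \<longrightarrow> fst (hd (runs s)) = hd s)
   \<and> (runs s = [] \<longleftrightarrow> s = [])"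
proof (induction s)
  case (Cons x s)
  show ?case
  proof (cases "runs s")
    case (Cons p r)
    with Cons.IH show ?thesis
      by (cases p) (auto simp: valid_runs_Cons)
  qed (use Cons.IH in \<open>simp add: valid_runs_def\<close>)
qed (simp add: valid_runs_def)

lemma unruns_runs [simp]: "unruns (runs s) = s"
  using runs_correct by blast

lemma valid_runs_runs: "valid_runs (runs s)"
  using runs_correct by blast

lemma fst_hd_runs: "runs s \<noteq> [] \<Longrightarrow> fst (hd (runs s)) = hd s"
  using runs_correct by blast

lemma runs_eq_Nil_iff [simp]: "runs s = [] \<longleftrightarrow> s = []"
  using runs_correct by blast

lemma unruns_valid_runs:
  assumes "valid_runs rs" "rs \<noteq> []"
  shows "unruns rs \<noteq> [] \<and> hd (unruns rs) = fst (hd rs) \<and> last (unruns rs) = fst (last rs)"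
proof -
  obtain c d r where r: "rs = (c, d) # r" using assms(2) by (cases rs) auto
  obtain c' d' r' where r': "rs = r' @ [(c', d')]" using assms(2) by (cases rs rule: rev_cases) auto
  have "1 \<le> d" using assms(1) r by (simp add: valid_runs_def)
  then have "unruns rs \<noteq> [] \<and> hd (unruns rs) = fst (hd rs)" by (cases d) (auto simp: r)
  moreover have "1 \<le> d'" using assms(1) r' by (simp add: valid_runs_def)
  then have "last (unruns rs) = fst (last rs)" by (cases d') (auto simp: r')
  ultimately show ?thesis by blast
qed

lemma sum_list_runs: "sum_list (map snd (runs s)) = length s"
proof -
  have "length (unruns rs) = sum_list (map snd rs)" for rs :: "('b \<times> nat) list"
    by (induction rs) auto
  from this[of "runs s"] show ?thesis by simp
qed

lemma adj_Nil [simp]: "adj [] = []"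
  by (simp add: adj_def)

lemma adj_singleton [simp]: "adj [x] = []"
  by (simp add: adj_def)

lemma adj_Cons_Cons [simp]: "adj (x # y # s) = (x, y) # adj (y # s)"
  by (simp add: adj_def)

lemma adj_Cons: "adj (x # s) = (if s = [] then [] else (x, hd s) # adj s)"
  by (cases s) auto

lemma adj_append:
  "u \<noteq> [] \<Longrightarrow> v \<noteq> [] \<Longrightarrow> adj (u @ v) = adj u @ [(last u, hd v)] @ adj v"
  by (induction u) (auto simp: adj_Cons)

lemma length_adj [simp]: "length (adj s) = length s - 1"
  by (simp add: adj_def)

lemma set_adj: "(x, y) \<in> set (adj s) \<Longrightarrow> x \<in> set s \<and> y \<in> set s"
  by (induction s rule: induct_list012) auto

lemma length_filter_disj:
  assumes "\<And>x. x \<in> set xs \<Longrightarrow> P x \<longleftrightarrow> Q x \<or> R x"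
    and "\<And>x. x \<in> set xs \<Longrightarrow> \<not> (Q x \<and> R x)"
  shows "length (filter P xs) = length (filter Q xs) + length (filter R xs)"
  using assms by (induction xs) auto

definition eq_adj :: "'b list \<Rightarrow> nat" where
  "eq_adj s = length (filter (\<lambda>(x, y). x = y) (adj s))"

definition neq_adj :: "'b list \<Rightarrow> nat" where
  "neq_adj s = length (filter (\<lambda>(x, y). x \<noteq> y) (adj s))"

lemma eq_adj_Cons: "eq_adj (x # s) = eq_adj s + (if s \<noteq> [] \<and> x = hd s then 1 else 0)"
  by (cases s) (auto simp: eq_adj_def)

lemma neq_adj_Cons: "neq_adj (x # s) = neq_adj s + (if s \<noteq> [] \<and> x \<noteq> hd s then 1 else 0)"
  by (cases s) (auto simp: neq_adj_def)

lemma neq_adj_append_le: "u \<noteq> [] \<Longrightarrow> v \<noteq> [] \<Longrightarrow> neq_adj (u @ v) \<le> neq_adj u + 1 + neq_adj v"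
  by (auto simp: neq_adj_def adj_append)

lemma eq_adj_plus_neq_adj: "eq_adj s + neq_adj s = length s - 1"
proof -
  have "length (filter (\<lambda>_. True) (adj s)) = eq_adj s + neq_adj s"
    unfolding eq_adj_def neq_adj_def by (rule length_filter_disj) auto
  then show ?thesis by simp
qed

lemma neq_adj_replicate [simp]: "neq_adj (replicate d c) = 0"
proof (induction d)
  case (Suc d)
  then show ?case by (cases d) (auto simp: neq_adj_Cons)
qed (simp add: neq_adj_def)

lemma length_runs: "length (runs s) = (if s = [] then 0 else Suc (neq_adj s))"
proof (induction s)
  case (Cons x s)
  show ?case
  proof (cases "runs s")
    case (Cons p r)
    moreover have "fst p = hd s" "s \<noteq> []" using fst_hd_runs[of s] Cons by auto
    ultimately show ?thesis using Cons.IH by (cases p) (auto simp: neq_adj_Cons)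
  qed (simp add: neq_adj_def)
qed simp

lemma length_runs_append_le: "length (runs (u @ v)) \<le> length (runs u) + length (runs v)"
  using neq_adj_append_le[of u v] by (cases "u = [] \<or> v = []") (auto simp: length_runs)

lemma length_runs_replicate_le: "length (runs (replicate d c)) \<le> 1"
  by (simp add: length_runs)

lemma runs_append:
  "u = [] \<or> v = [] \<or> last u \<noteq> hd v \<Longrightarrow> runs (u @ v) = runs u @ runs v"
proof (induction u)
  case (Cons x u)
  show ?case
  proof (cases "u = []")
    case True
    then show ?thesis
      using Cons.prems fst_hd_runs[of v] by (cases "runs v") (auto split: prod.splits)
  next
    case False
    then show ?thesis
      using Cons by (cases "runs u") (auto split: prod.splits)
  qed
qed simp

section \<open>Block compression\<close>

lemma bcomp_append:
  "u = [] \<or> v = [] \<or> last u \<noteq> hd v \<Longrightarrow> bcomp (u @ v) = bcomp u @ bcomp v"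
  by (simp add: bcomp_def runs_append)

lemma bcomp_append3:
  assumes "v \<noteq> []" "u = [] \<or> last u \<noteq> hd v" "w = [] \<or> last v \<noteq> hd w"
  shows "bcomp (u @ v @ w) = bcomp u @ bcomp v @ bcomp w"
  using assms bcomp_append[of u "v @ w"] bcomp_append[of v w] by auto

lemma bc_run_pos: "1 \<le> d \<Longrightarrow> bc_run (c, d) = [if 2 \<le> d then Run c d else c]"
  by (cases "d = 1") (auto simp: bc_run_def)

text \<open>Adjacent runs have different letters, so an equal adjacent pair of output letters always
  contains a run letter \<open>Run c d\<close>, which saves at least one letter; the last summand on the
  left reserves that saving for a leading run letter.\<close>
lemma bc_runs_bound:
  assumes "valid_runs rs"
  shows "eq_adj (concat (map bc_run rs)) + 2 * length (concat (map bc_run rs))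
          + (if rs \<noteq> [] \<and> 2 \<le> snd (hd rs) then 1 else 0) \<le> 2 * sum_list (map snd rs)
     \<and> (rs \<noteq> [] \<longrightarrow> concat (map bc_run rs) \<noteq> [] \<and>
          hd (concat (map bc_run rs)) =
            (if 2 \<le> snd (hd rs) then Run (fst (hd rs)) (snd (hd rs)) else fst (hd rs)))"
  using assms
proof (induction rs)
  case (Cons p rs)
  obtain c d where p: "p = (c, d)" by force
  have d: "1 \<le> d" and rs: "valid_runs rs" and neq: "rs \<noteq> [] \<Longrightarrow> c \<noteq> fst (hd rs)"
    using Cons.prems p by (auto simp: valid_runs_Cons)
  let ?o = "concat (map bc_run rs)"
  note IH = Cons.IH[OF rs]
  have "(if ?o \<noteq> [] \<and> c = hd ?o then 1 else 0) \<le> (if rs \<noteq> [] \<and> 2 \<le> snd (hd rs) then 1 else 0 :: nat)"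
    using IH neq by (cases rs) auto
  then show ?case
    using IH bc_run_pos[OF d] eq_adj_Cons[of _ ?o] d p by auto
qed (simp add: eq_adj_def)

lemma bcomp_shrinks: "eq_adj (bcomp s) + 2 * length (bcomp s) \<le> 2 * length s"
  using bc_runs_bound[OF valid_runs_runs[of s]] sum_list_runs[of s]
  unfolding bcomp_def by linarith

lemma bcomp_eq_Nil_iff [simp]: "bcomp s = [] \<longleftrightarrow> s = []"
  using bc_runs_bound[OF valid_runs_runs[of s]] by (auto simp: bcomp_def)

lemma length_bcomp_le: "length (bcomp s) \<le> length s"
  using bcomp_shrinks[of s] by linarith

section \<open>Pair compression\<close>

lemma pcomp_append:
  "u = [] \<or> v = [] \<or> last u \<notin> L \<or> hd v \<notin> R \<Longrightarrow> pcomp L R (u @ v) = pcomp L R u @ pcomp L R v"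
proof (induction L R u rule: pcomp.induct)
  case (1 L R a b s)
  then show ?case by (cases s) auto
qed (cases v, auto)+

lemma pcomp_append3:
  assumes "v \<noteq> []" "u = [] \<or> last u \<notin> L \<or> hd v \<notin> R" "w = [] \<or> last v \<notin> L \<or> hd w \<notin> R"
  shows "pcomp L R (u @ v @ w) = pcomp L R u @ pcomp L R v @ pcomp L R w"
  using assms pcomp_append[of u "v @ w" L R] pcomp_append[of v w L R] by auto

lemma length_pcomp_le: "length (pcomp L R s) \<le> length s"
  by (induction L R s rule: pcomp.induct) auto

lemma pcomp_eq_Nil_iff [simp]: "pcomp L R s = [] \<longleftrightarrow> s = []"
  by (induction L R s rule: pcomp.induct) auto

lemma cnt_LR_Cons_Cons:
  "cnt_LR (a # b # s) L R = (if a \<in> L \<and> b \<in> R then 1 else 0) + cnt_LR (b # s) L R"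
  by (simp add: cnt_LR_def)

lemma length_pcomp: "L \<inter> R = {} \<Longrightarrow> length (pcomp L R s) + cnt_LR s L R = length s"
proof (induction L R s rule: pcomp.induct)
  case (1 L R a b s)
  show ?case
  proof (cases "a \<in> L \<and> b \<in> R")
    case True
    with 1(3) have "cnt_LR (b # s) L R = cnt_LR s L R"
      by (cases s) (auto simp: cnt_LR_Cons_Cons, simp add: cnt_LR_def)
    with True 1 show ?thesis by (simp add: cnt_LR_Cons_Cons)
  next
    case False
    then have "pcomp L R (a # b # s) = a # pcomp L R (b # s)"
      and "cnt_LR (a # b # s) L R = cnt_LR (b # s) L R"
      by (simp_all add: cnt_LR_Cons_Cons)
    with 1(2)[OF False 1(3)] show ?thesis by simp
  qed
qed (auto simp: cnt_LR_def)

lemma length_pcomp_less: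
  assumes "L \<inter> R = {}" "(a, b) \<in> set (adj s)" "a \<in> L" "b \<in> R"
  shows "length (pcomp L R s) < length s"
proof -
  have "filter (\<lambda>(x, y). x \<in> L \<and> y \<in> R) (adj s) \<noteq> []"
    using assms(2-4) by (auto simp: filter_empty_conv)
  then have "0 < cnt_LR s L R" by (simp add: cnt_LR_def)
  then show ?thesis using length_pcomp[OF assms(1), of s] by linarith
qed

definition cnt_cross :: "sym list \<Rightarrow> sym set \<Rightarrow> sym set \<Rightarrow> nat" where
  "cnt_cross s L R = length (filter (\<lambda>(x, y). x \<in> L \<and> y \<in> R \<or> x \<in> R \<and> y \<in> L) (adj s))"

definition cnt_within :: "sym list \<Rightarrow> sym set \<Rightarrow> nat" where
  "cnt_within s P = length (filter (\<lambda>(x, y). x \<noteq> y \<and> x \<in> P \<and> y \<in> P) (adj s))"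

lemma cnt_within_insert: "c \<notin> P \<Longrightarrow> cnt_within s (insert c P) = cnt_within s P + cnt_with s c P"
  unfolding cnt_within_def cnt_with_def by (rule length_filter_disj) auto

lemma cnt_with_Un: "L \<inter> R = {} \<Longrightarrow> cnt_with s c (L \<union> R) = cnt_with s c L + cnt_with s c R"
  unfolding cnt_with_def by (rule length_filter_disj) auto

lemma cnt_cross_insert_left:
  "c \<notin> L \<Longrightarrow> c \<notin> R \<Longrightarrow> cnt_cross s (insert c L) R = cnt_cross s L R + cnt_with s c R"
  unfolding cnt_cross_def cnt_with_def by (rule length_filter_disj) auto

lemma cnt_cross_insert_right:
  "c \<notin> L \<Longrightarrow> c \<notin> R \<Longrightarrow> cnt_cross s L (insert c R) = cnt_cross s L R + cnt_with s c L"
  unfolding cnt_cross_def cnt_with_def by (rule length_filter_disj) auto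

lemma cnt_cross_eq: "L \<inter> R = {} \<Longrightarrow> cnt_cross s L R = cnt_LR s L R + cnt_LR s R L"
  unfolding cnt_cross_def cnt_LR_def by (rule length_filter_disj) auto

lemma cnt_within_set: "cnt_within s (set s) = neq_adj s"
  unfolding cnt_within_def neq_adj_def
  by (rule arg_cong[where f = length], rule filter_cong) (auto dest: set_adj)

text \<open>Each new letter goes to the side where at least half of its pairs with placed letters
  become crossing, so crossing pairs always make up at least half of the pairs inside.\<close>
lemma greedy_fold_invariant:
  assumes "distinct cs" "set cs \<inter> (L \<union> R) = {}" "L \<inter> R = {}"
    and "cnt_within s (L \<union> R) \<le> 2 * cnt_cross s L R"
    and "fold (greedy_step s) cs (L, R) = (L', R')"
  shows "L' \<inter> R' = {} \<and> L' \<union> R' = L \<union> R \<union> set cs \<and> cnt_within s (L' \<union> R') \<le> 2 * cnt_cross s L' R'"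
  using assms
proof (induction cs arbitrary: L R)
  case (Cons c cs)
  have c: "c \<notin> L" "c \<notin> R" using Cons.prems by auto
  have within: "cnt_within s (insert c (L \<union> R)) = cnt_within s (L \<union> R) + cnt_with s c L + cnt_with s c R"
    using cnt_within_insert[of c "L \<union> R" s] cnt_with_Un[OF Cons.prems(3)] c by simp
  show ?case
  proof (cases "cnt_with s c L \<le> cnt_with s c R")
    case True
    then have "greedy_step s c (L, R) = (insert c L, R)" by (simp add: greedy_step_def)
    moreover have "cnt_within s (insert c L \<union> R) \<le> 2 * cnt_cross s (insert c L) R"
      using within cnt_cross_insert_left[OF c] Cons.prems(4) True by simp
    ultimately show ?thesis using Cons.IH[of "insert c L" R] Cons.prems by auto
  next
    case False
    then have "greedy_step s c (L, R) = (L, insert c R)" by (simp add: greedy_step_def)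
    moreover have "cnt_within s (L \<union> insert c R) \<le> 2 * cnt_cross s L (insert c R)"
      using within cnt_cross_insert_right[OF c] Cons.prems(4) False by simp
    ultimately show ?thesis using Cons.IH[of L "insert c R"] Cons.prems by auto
  qed
qed simp

lemma partition_lr_props:
  assumes "partition_lr rk s = (L, R)"
  shows "L \<inter> R = {} \<and> L \<union> R = set s \<and> length s \<le> 4 * cnt_LR s L R + eq_adj s + 1"
proof -
  obtain L0 R0 where fold: "fold (greedy_step s) (sort_key rk (remdups s)) ({}, {}) = (L0, R0)"
    by force
  have "L0 \<inter> R0 = {} \<and> L0 \<union> R0 = {} \<union> {} \<union> set (sort_key rk (remdups s))
      \<and> cnt_within s (L0 \<union> R0) \<le> 2 * cnt_cross s L0 R0"
    by (rule greedy_fold_invariant[OF _ _ _ _ fold]) (simp_all add: cnt_within_def)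
  then have LR0: "L0 \<inter> R0 = {}" "L0 \<union> R0 = set s"
    and "cnt_within s (L0 \<union> R0) \<le> 2 * cnt_cross s L0 R0"
    by auto
  then have "neq_adj s \<le> 2 * (cnt_LR s L0 R0 + cnt_LR s R0 L0)"
    using cnt_within_set[of s] cnt_cross_eq[of L0 R0 s] by simp
  moreover have "eq_adj s + neq_adj s = length s - 1" by (rule eq_adj_plus_neq_adj)
  moreover have "(L, R) = (if cnt_LR s L0 R0 < cnt_LR s R0 L0 then (R0, L0) else (L0, R0))"
    using assms fold by (simp add: partition_lr_def)
  ultimately show ?thesis using LR0 by (auto split: if_splits)
qed

lemma partition_lr_pcomp_bound:
  "partition_lr rk s = (L, R) \<Longrightarrow> 4 * length (pcomp L R s) \<le> 3 * length s + eq_adj s + 1"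
  using partition_lr_props[of rk s L R] length_pcomp[of L R s] by linarith

section \<open>The levels \<open>T\<^sub>h\<close> and their lengths\<close>

fun expand :: "sym \<Rightarrow> sym list" where
  "expand (Term k) = [Term k]"
| "expand (Run c d) = concat (replicate d (expand c))"
| "expand (Pair a b) = expand a @ expand b"

definition expand_list :: "sym list \<Rightarrow> sym list" where
  "expand_list s = concat (map expand s)"

definition slen_list :: "sym list \<Rightarrow> nat" where
  "slen_list s = sum_list (map slen s)"

lemma length_expand: "length (expand x) = slen x"
proof -
  have "length (concat (replicate d xs)) = d * length xs" for d and xs :: "sym list"
    by (induction d) auto
  then show ?thesis by (induction x) auto
qed

lemma expand_list_Nil [simp]: "expand_list [] = []"
  by (simp add: expand_list_def)

lemma expand_list_Cons [simp]: "expand_list (x # s) = expand x @ expand_list s"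
  by (simp add: expand_list_def)

lemma expand_list_append [simp]: "expand_list (u @ v) = expand_list u @ expand_list v"
  by (simp add: expand_list_def)

lemma slen_list_Nil [simp]: "slen_list [] = 0"
  by (simp add: slen_list_def)

lemma slen_list_Cons [simp]: "slen_list (x # s) = slen x + slen_list s"
  by (simp add: slen_list_def)

lemma slen_list_append [simp]: "slen_list (u @ v) = slen_list u + slen_list v"
  by (simp add: slen_list_def)

lemma slen_list_eq_length_expand_list: "slen_list s = length (expand_list s)"
  by (induction s) (auto simp: length_expand)

lemma expand_list_bcomp [simp]: "expand_list (bcomp s) = expand_list s"
proof -
  have "expand_list (concat (map bc_run rs)) = expand_list (unruns rs)" for rs
  proof (induction rs)
    case (Cons p rs)
    have "expand_list (replicate d c) = concat (replicate d (expand c))" for d c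
      by (induction d) auto
    with Cons show ?case by (cases p) (auto simp: bc_run_def expand_list_def)
  qed simp
  then show ?thesis by (simp add: bcomp_def)
qed

lemma expand_list_pcomp [simp]: "expand_list (pcomp L R s) = expand_list s"
  by (induction L R s rule: pcomp.induct) auto

lemma slen_list_bcomp [simp]: "slen_list (bcomp s) = slen_list s"
  by (simp add: slen_list_eq_length_expand_list)

lemma slen_list_pcomp [simp]: "slen_list (pcomp L R s) = slen_list s"
  by (simp add: slen_list_eq_length_expand_list)

lemma partition_lr_Tlev: "partition_lr rk (Tlev rk T h) = (Lset rk T h, Rset rk T h)"
  by (simp add: Lset_def Rset_def)

lemma Lset_Rset_partition:
  "Lset rk T h \<inter> Rset rk T h = {} \<and> Lset rk T h \<union> Rset rk T h = set (Tlev rk T h)"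
  using partition_lr_props[OF partition_lr_Tlev[of rk T h]] by blast

lemma Tlev_Suc_even: "even h \<Longrightarrow> Tlev rk T (Suc h) = bcomp (Tlev rk T h)"
  by simp

lemma Tlev_Suc_odd:
  "odd h \<Longrightarrow> Tlev rk T (Suc h) = pcomp (Lset rk T h) (Rset rk T h) (Tlev rk T h)"
  using partition_lr_Tlev[of rk T h] by simp

declare Tlev.simps(2) [simp del]

lemma T0_append [simp]: "T0 T (u @ v) = T0 T u @ T0 T v"
  by (simp add: T0_def)

lemma length_T0 [simp]: "length (T0 T u) = length u"
  by (simp add: T0_def)

lemma expand_list_T0 [simp]: "expand_list (T0 T w) = T0 T w"
  by (induction w) (auto simp: T0_def)

lemma slen_list_T0 [simp]: "slen_list (T0 T u) = length u"
  by (induction u) (auto simp: T0_def)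

lemma expand_list_Tlev: "expand_list (Tlev rk T h) = T0 T T"
proof (induction h)
  case (Suc h)
  then show ?case by (cases "even h") (simp_all add: Tlev_Suc_even Tlev_Suc_odd)
qed simp

lemma Tlev_neq_Nil: "T \<noteq> [] \<Longrightarrow> Tlev rk T h \<noteq> []"
  using expand_list_Tlev[of rk T h] by (auto simp: T0_def)

text \<open>Pair compression removes at least a quarter of the unequal adjacent pairs, and every
  equal adjacent pair left by block compression has been paid for by that compression.\<close>
lemma Tlev_two_levels_shrink:
  assumes "even h"
  shows "4 * length (Tlev rk T (Suc (Suc h))) \<le> 3 * length (Tlev rk T h) + 1"
proof -
  let ?s = "Tlev rk T (Suc h)"
  have "4 * length (Tlev rk T (Suc (Suc h))) \<le> 3 * length ?s + eq_adj ?s + 1"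
    using partition_lr_pcomp_bound[OF partition_lr_Tlev[of rk T "Suc h"]] assms
    by (simp add: Tlev_Suc_odd)
  moreover have "eq_adj ?s + 2 * length ?s \<le> 2 * length (Tlev rk T h)"
    using bcomp_shrinks assms by (simp add: Tlev_Suc_even)
  ultimately show ?thesis by linarith
qed

lemma Tlev_decay:
  assumes "T \<noteq> []"
  shows "4 ^ j * (length (Tlev rk T (2 * j)) - 1) \<le> 3 ^ j * (length T - 1)"
proof (induction j)
  case (Suc j)
  define x where "x = length (Tlev rk T (2 * Suc j))"
  define y where "y = length (Tlev rk T (2 * j))"
  have "4 * x \<le> 3 * y + 1"
    using Tlev_two_levels_shrink[of "2 * j" rk T] by (simp add: x_def y_def)
  moreover have "1 \<le> x" "1 \<le> y"
    using Tlev_neq_Nil[OF assms] by (simp_all add: x_def y_def Suc_le_eq)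
  ultimately have "4 * (x - 1) \<le> 3 * (y - 1)" by linarith
  then have "4 ^ Suc j * (x - 1) \<le> 3 * (4 ^ j * (y - 1))"
    using mult_le_mono2[of "4 * (x - 1)" "3 * (y - 1)" "4 ^ j"] by (simp add: ac_simps)
  also have "\<dots> \<le> 3 * (3 ^ j * (length T - 1))"
    using Suc.IH by (simp add: y_def)
  finally show ?case by (simp add: x_def)
qed (simp add: T0_def)

lemma Tlev_length_le_1:
  assumes "T \<noteq> []" "length T \<le> 2 ^ k"
  shows "length (Tlev rk T (6 * k)) \<le> 1"
proof (rule ccontr)
  have "0 < length T" using assms(1) by simp
  then have T: "length T - 1 < 2 ^ k" using assms(2) by linarith
  assume "\<not> length (Tlev rk T (6 * k)) \<le> 1"
  then have a: "1 \<le> length (Tlev rk T (2 * (3 * k))) - 1" by simp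
  have "(64::nat) ^ k \<le> 4 ^ (3 * k) * (length (Tlev rk T (2 * (3 * k))) - 1)"
    using a by (simp add: power_mult)
  also have "\<dots> \<le> 3 ^ (3 * k) * (length T - 1)"
    by (rule Tlev_decay[OF assms(1)])
  also have "\<dots> < 27 ^ k * 2 ^ k"
    using T by (simp add: power_mult)
  also have "\<dots> \<le> 64 ^ k"
    by (simp add: power_mult_distrib[symmetric] power_mono)
  finally show False by simp
qed

lemma exists_pow2_bound:
  assumes "1 \<le> N"
  shows "\<exists>k::nat. N \<le> 2 ^ k \<and> real k \<le> log 2 (real N) + 1"
proof -
  define k where "k = nat \<lceil>log 2 (real N)\<rceil>"
  have k: "real k = of_int \<lceil>log 2 (real N)\<rceil>"
    using assms by (simp add: k_def)
  have "real N = 2 powr (log 2 (real N))" using assms by simp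
  also have "\<dots> \<le> 2 powr (real k)" unfolding k by (intro powr_mono) auto
  also have "\<dots> = 2 ^ k" by (simp add: powr_realpow)
  finally have "N \<le> 2 ^ k" by (metis of_nat_le_iff of_nat_numeral of_nat_power)
  moreover have "real k \<le> log 2 (real N) + 1" unfolding k by linarith
  ultimately show ?thesis by blast
qed

section \<open>One level of the popping process\<close>

lemma last_hd_mem_adj: "u \<noteq> [] \<Longrightarrow> v \<noteq> [] \<Longrightarrow> (last u, hd v) \<in> set (adj (u @ v))"
  by (simp add: adj_append)

lemma adj_crossing:
  "xs \<noteq> [] \<Longrightarrow> hd xs \<in> P \<Longrightarrow> last xs \<notin> P \<Longrightarrow> \<exists>(a, b)\<in>set (adj xs). a \<in> P \<and> b \<notin> P"
proof (induction xs)
  case (Cons x xs)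
  then show ?case
    by (cases "xs = []") (auto simp: adj_Cons split: if_splits)
qed simp

lemma Bset_if_adj_eq: "(c, c) \<in> set (adj s) \<Longrightarrow> c \<in> Bset s"
proof (induction s)
  case (Cons x s)
  then have "s \<noteq> []" by auto
  then obtain y n r where s: "runs s = (y, n) # r" and y: "y = hd s" and n: "1 \<le> n"
    using fst_hd_runs[of s] valid_runs_runs[of s]
    by (cases "runs s") (auto simp: valid_runs_Cons)
  show ?case
  proof (cases "(c, c) \<in> set (adj s)")
    case True
    then obtain d where "2 \<le> d" "(c, d) \<in> set (runs s)"
      using Cons.IH by (auto simp: Bset_def)
    with s n show ?thesis
      by (cases "(c, d) = (y, n)") (auto simp: Bset_def intro: exI[of _ "Suc n"])
  next
    case False
    with Cons.prems \<open>s \<noteq> []\<close> have "c = x" "x = hd s" by (auto simp: adj_Cons)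
    with s y n show ?thesis by (auto simp: Bset_def intro: exI[of _ "Suc n"])
  qed
qed simp

definition pop_run_left :: "sym set \<Rightarrow> (sym \<times> nat) list \<Rightarrow> sym list \<times> (sym \<times> nat) list" where
  "pop_run_left B rs =
     (case rs of [] \<Rightarrow> ([], []) | (c, d) # r \<Rightarrow> if c \<in> B then (replicate d c, r) else ([], rs))"

lemma pop_even_eq:
  "pop_even B w = (case pop_run_left B (runs w) of (lp, rs1) \<Rightarrow>
     case pop_run_left B (rev rs1) of (rp, rs2) \<Rightarrow> (lp, bcomp (unruns (rev rs2)), rp))"
  by (auto simp: pop_even_def pop_run_left_def split: list.split prod.split)

lemma pop_run_left_split:
  assumes "valid_runs rs" "pop_run_left B rs = (p, rs')"
  shows "unruns rs = p @ unruns rs' \<and> valid_runs rs' \<and> (\<exists>c d. p = replicate d c)"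
proof (cases rs)
  case (Cons q r)
  obtain c d where q: "q = (c, d)" by force
  have "p = replicate (if c \<in> B then d else 0) c" "rs' = (if c \<in> B then r else rs)"
    using assms(2) Cons q by (auto simp: pop_run_left_def)
  then show ?thesis using assms(1) Cons q by (auto simp: valid_runs_Cons)
qed (use assms in \<open>auto simp: pop_run_left_def\<close>)

lemma pop_run_left_border:
  assumes "valid_runs rs" "pop_run_left B rs = (p, rs')" "rs' \<noteq> []"
    and "u \<noteq> [] \<Longrightarrow> last u = fst (hd rs) \<Longrightarrow> fst (hd rs) \<in> B"
  shows "u @ p = [] \<or> last (u @ p) \<noteq> fst (hd rs')"
proof (cases rs)
  case (Cons q r)
  obtain c d where q: "q = (c, d)" by force
  with Cons assms(1) have "1 \<le> d" "r \<noteq> [] \<Longrightarrow> c \<noteq> fst (hd r)"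
    by (auto simp: valid_runs_Cons)
  with Cons q assms(2-4) show ?thesis
    by (cases d) (auto simp: pop_run_left_def split: if_splits)
qed (use assms in \<open>simp add: pop_run_left_def\<close>)

lemma last_eq_hd_in_Bset: "u \<noteq> [] \<Longrightarrow> v \<noteq> [] \<Longrightarrow> last u = hd v \<Longrightarrow> hd v \<in> Bset (u @ v)"
  using Bset_if_adj_eq[of "hd v" "u @ v"] last_hd_mem_adj[of u v] by simp

text \<open>Since \<open>B\<close> contains every letter of an equal adjacent pair of the level, a run of
  \<open>m\<close> that is not popped cannot be continued across the border of \<open>m\<close>; hence block
  compression of the level restricts to block compression of the remainder.\<close>
lemma pop_even_split:
  assumes "pop_even (Bset (X @ m @ Y)) m = (lp, m', rp)"
  shows "\<exists>m0. m = lp @ m0 @ rp \<and> m' = bcomp m0 \<and> (\<exists>c d. lp = replicate d c) \<and> (\<exists>c d. rp = replicate d c)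
     \<and> (m0 \<noteq> [] \<longrightarrow> (X @ lp = [] \<or> last (X @ lp) \<noteq> hd m0) \<and> (rp @ Y = [] \<or> last m0 \<noteq> hd (rp @ Y)))"
proof -
  let ?B = "Bset (X @ m @ Y)"
  obtain lp' rs1 where 1: "pop_run_left ?B (runs m) = (lp', rs1)" by force
  obtain rp' rs2 where 2: "pop_run_left ?B (rev rs1) = (rp', rs2)" by force
  have eqs: "lp = lp'" "rp = rp'" "m' = bcomp (unruns (rev rs2))"
    using assms 1 2 by (simp_all add: pop_even_eq)
  note L = pop_run_left_split[OF valid_runs_runs 1]
  then have valid: "valid_runs (rev rs1)" by simp
  note R = pop_run_left_split[OF this 2]
  define m0 where "m0 = unruns (rev rs2)"
  obtain c d where rp: "rp = replicate d c" using R eqs by blast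
  have "unruns rs1 = rev (rp @ unruns rs2)"
    using R eqs by (metis rev_rev_ident unruns_rev)
  then have rs1: "unruns rs1 = m0 @ rp" by (simp add: m0_def unruns_rev rp)
  have m: "m = lp @ m0 @ rp" using L rs1 eqs by simp
  have left: "X @ lp = [] \<or> last (X @ lp) \<noteq> hd m0" if "m0 \<noteq> []"
  proof -
    have "rs1 \<noteq> []" "m \<noteq> []" using that rs1 m by auto
    moreover have "hd m0 = fst (hd rs1)"
      using that rs1 unruns_valid_runs[of rs1] L \<open>rs1 \<noteq> []\<close> by simp
    ultimately show ?thesis
      using pop_run_left_border[OF valid_runs_runs 1, of X] last_eq_hd_in_Bset[of X "m @ Y"]
      by (simp add: fst_hd_runs eqs)
  qed
  have right: "rp @ Y = [] \<or> last m0 \<noteq> hd (rp @ Y)" if "m0 \<noteq> []"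
  proof -
    have "rs2 \<noteq> []" "rs1 \<noteq> []" "m \<noteq> []" using that rs1 m by (auto simp: m0_def)
    have "fst (hd (rev rs1)) \<in> ?B" if "rev Y \<noteq> []" "last (rev Y) = fst (hd (rev rs1))"
    proof -
      have "fst (last rs1) = last (X @ m)"
        using L unruns_valid_runs[of rs1] \<open>rs1 \<noteq> []\<close> by simp
      then show ?thesis
        using that last_eq_hd_in_Bset[of "X @ m" Y] \<open>m \<noteq> []\<close> by (simp add: hd_rev last_rev)
    qed
    then have "rev Y @ rp = [] \<or> last (rev Y @ rp) \<noteq> fst (hd rs2)"
      using pop_run_left_border[OF valid 2 \<open>rs2 \<noteq> []\<close>] eqs(2) by blast
    moreover have "last m0 = fst (hd rs2)"
      using R unruns_valid_runs[of "rev rs2"] \<open>rs2 \<noteq> []\<close> by (simp add: m0_def last_rev)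
    ultimately show ?thesis by (cases d) (auto simp: rp last_rev split: if_splits)
  qed
  have "\<exists>c d. lp = replicate d c" using L eqs by blast
  with m eqs(3) rp left right show ?thesis
    by (intro exI[of _ m0]) (auto simp: m0_def)
qed

definition pop_letter_left :: "sym set \<Rightarrow> sym list \<Rightarrow> sym list \<times> sym list" where
  "pop_letter_left P w = (case w of [] \<Rightarrow> ([], []) | a # r \<Rightarrow> if a \<in> P then ([a], r) else ([], w))"

lemma pop_odd_eq:
  "pop_odd L R w = (case pop_letter_left R w of (lp, w1) \<Rightarrow>
     case pop_letter_left L (rev w1) of (rp, w2) \<Rightarrow> (lp, pcomp L R (rev w2), rp))"
  by (auto simp: pop_odd_def pop_letter_left_def split: list.split prod.split)

lemma pop_letter_left_split:
  "pop_letter_left P w = (p, w') \<Longrightarrow>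
     w = p @ w' \<and> (p = [] \<or> (\<exists>a\<in>P. p = [a])) \<and> (p = [] \<longrightarrow> w' \<noteq> [] \<longrightarrow> hd w' \<notin> P)"
  by (cases w) (auto simp: pop_letter_left_def split: if_splits)

lemma pop_odd_split:
  assumes "L \<inter> R = {}" "pop_odd L R m = (lp, m', rp)"
  shows "\<exists>m0. m = lp @ m0 @ rp \<and> m' = pcomp L R m0 \<and> (\<exists>c d. lp = replicate d c) \<and> (\<exists>c d. rp = replicate d c)
     \<and> (m0 \<noteq> [] \<longrightarrow> (X @ lp = [] \<or> last (X @ lp) \<notin> L \<or> hd m0 \<notin> R)
                   \<and> (rp @ Y = [] \<or> last m0 \<notin> L \<or> hd (rp @ Y) \<notin> R))"
proof -
  obtain lp' w1 where 1: "pop_letter_left R m = (lp', w1)" by force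
  obtain rp' w2 where 2: "pop_letter_left L (rev w1) = (rp', w2)" by force
  have eqs: "lp = lp'" "rp = rp'" "m' = pcomp L R (rev w2)"
    using assms(2) 1 2 by (simp_all add: pop_odd_eq)
  note l = pop_letter_left_split[OF 1] and r = pop_letter_left_split[OF 2]
  have w1: "w1 = rev w2 @ rp" using r eqs by (metis rev_append rev_rev_ident rev_singleton_conv rev.simps(1))
  have single: "\<exists>c d. p = replicate d c" if "p = [] \<or> (\<exists>a. p = [a])" for p :: "sym list"
    using that by (metis replicate_0 replicate_Suc)
  show ?thesis
  proof (intro exI[of _ "rev w2"] conjI impI)
    show "m = lp @ rev w2 @ rp" using l w1 eqs by simp
    show "m' = pcomp L R (rev w2)" "\<exists>c d. lp = replicate d c" "\<exists>c d. rp = replicate d c"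
      using l r eqs single by blast+
  next
    assume "rev w2 \<noteq> []"
    then show "X @ lp = [] \<or> last (X @ lp) \<notin> L \<or> hd (rev w2) \<notin> R"
      using l w1 assms(1) eqs by auto
    show "rp @ Y = [] \<or> last (rev w2) \<notin> L \<or> hd (rp @ Y) \<notin> R"
      using r \<open>rev w2 \<noteq> []\<close> assms(1) eqs by (auto simp: last_rev)
  qed
qed

lemma pop_odd_shrinks:
  assumes "L \<inter> R = {}" "set m \<subseteq> L \<union> R" "m \<noteq> []" "pop_odd L R m = (lp, m', rp)"
  shows "length m' < length m"
proof -
  obtain lp' w1 where 1: "pop_letter_left R m = (lp', w1)" by force
  obtain rp' w2 where 2: "pop_letter_left L (rev w1) = (rp', w2)" by force
  have m': "m' = pcomp L R (rev w2)"
    using assms(4) 1 2 by (simp add: pop_odd_eq)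
  note l = pop_letter_left_split[OF 1] and r = pop_letter_left_split[OF 2]
  show ?thesis
  proof (cases "lp' = [] \<and> rp' = []")
    case True
    then have "m = rev w2" "hd m \<notin> R" "last m \<notin> L"
      using l r assms(3) by (auto simp: last_rev hd_rev)
    moreover have "hd m \<in> set m" "last m \<in> set m" using assms(3) by simp_all
    ultimately obtain a b where "(a, b) \<in> set (adj m)" "a \<in> L" "b \<notin> L"
      using adj_crossing[of m L] assms(2,3) by blast
    moreover have "b \<in> R" using set_adj[OF calculation(1)] calculation(3) assms(2) by blast
    ultimately show ?thesis
      using length_pcomp_less[OF assms(1)] m' \<open>m = rev w2\<close> by blast
  next
    case False
    then have "length (rev w2) < length m" using l r by auto
    then show ?thesis using length_pcomp_le[of L R "rev w2"] by (simp add: m')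
  qed
qed

section \<open>Iterating the popping process\<close>

definition pop_step ::
  "(sym \<Rightarrow> nat) \<Rightarrow> 'a::linorder list \<Rightarrow> nat \<Rightarrow> sym list \<Rightarrow> sym list \<times> sym list \<times> sym list" where
  "pop_step rk T h m =
     (if even h then pop_even (Bh rk T h) m else pop_odd (Lset rk T h) (Rset rk T h) m)"

lemma pops_Suc:
  "pops rk T h m (Suc f) = (case pop_step rk T h m of (l, m', r) \<Rightarrow>
     (case pops rk T (Suc h) m' f of (l', r') \<Rightarrow> (l @ l', r' @ r)))"
  by (simp add: pop_step_def)

declare pops.simps(2) [simp del]

lemma pop_step_Nil [simp]: "pop_step rk T h [] = ([], [], [])"
  by (simp add: pop_step_def pop_even_def pop_odd_def bcomp_def)

lemma pops_Nil [simp]: "pops rk T h [] f = ([], [])"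
  by (induction f arbitrary: h) (simp_all only: pops_Suc pop_step_Nil, auto)

fun pop_rest :: "(sym \<Rightarrow> nat) \<Rightarrow> 'a::linorder list \<Rightarrow> nat \<Rightarrow> sym list \<Rightarrow> nat \<Rightarrow> sym list" where
  "pop_rest rk T h m 0 = m"
| "pop_rest rk T h m (Suc f) = pop_rest rk T (Suc h) (fst (snd (pop_step rk T h m))) f"

lemma pop_rest_Nil [simp]: "pop_rest rk T h [] f = []"
  by (induction f arbitrary: h) auto

lemma pop_rest_add: "pop_rest rk T h m (f + g) = pop_rest rk T (h + f) (pop_rest rk T h m f) g"
  by (induction f arbitrary: h m) auto

lemma pop_rest_eq_Nil_mono:
  "pop_rest rk T h m f = [] \<Longrightarrow> f \<le> g \<Longrightarrow> pop_rest rk T h m g = []"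
  using pop_rest_add[of rk T h m f "g - f"] by simp

lemma pop_step_split:
  assumes T: "Tlev rk T h = X @ m @ Y" and st: "pop_step rk T h m = (lp, m', rp)"
  shows "\<exists>m0. m = lp @ m0 @ rp \<and> expand_list m' = expand_list m0 \<and> length m' \<le> length m0
     \<and> (m' = [] \<longleftrightarrow> m0 = []) \<and> (\<exists>c d. lp = replicate d c) \<and> (\<exists>c d. rp = replicate d c)
     \<and> (m' \<noteq> [] \<longrightarrow> (\<exists>X' Y'. Tlev rk T (Suc h) = X' @ m' @ Y'
                                 \<and> slen_list X' = slen_list X + slen_list lp))"
proof (cases "even h")
  case True
  then have "pop_even (Bset (X @ m @ Y)) m = (lp, m', rp)"
    using st T by (simp add: pop_step_def Bh_def)
  from pop_even_split[OF this] obtain m0 where m0: "m = lp @ m0 @ rp" "m' = bcomp m0"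
      "\<exists>c d. lp = replicate d c" "\<exists>c d. rp = replicate d c"
      "m0 \<noteq> [] \<longrightarrow> (X @ lp = [] \<or> last (X @ lp) \<noteq> hd m0) \<and> (rp @ Y = [] \<or> last m0 \<noteq> hd (rp @ Y))"
    by blast
  have split: "Tlev rk T (Suc h) = bcomp (X @ lp) @ m' @ bcomp (rp @ Y)" if "m0 \<noteq> []"
    using True T m0 that bcomp_append3[of m0 "X @ lp" "rp @ Y"] by (simp add: Tlev_Suc_even)
  show ?thesis
  proof (rule exI[of _ m0], intro conjI impI)
    assume "m' \<noteq> []"
    then have "m0 \<noteq> []" by (simp add: m0(2))
    with split show "\<exists>X' Y'. Tlev rk T (Suc h) = X' @ m' @ Y' \<and> slen_list X' = slen_list X + slen_list lp"
      by (intro exI[of _ "bcomp (X @ lp)"] exI[of _ "bcomp (rp @ Y)"]) simp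
  qed (use m0 length_bcomp_le[of m0] in simp_all)
next
  case False
  let ?L = "Lset rk T h" and ?R = "Rset rk T h"
  have LR: "?L \<inter> ?R = {}" using Lset_Rset_partition[of rk T h] by blast
  have "pop_odd ?L ?R m = (lp, m', rp)" using st False by (simp add: pop_step_def)
  from pop_odd_split[OF LR this, where X = X and Y = Y] obtain m0 where m0: "m = lp @ m0 @ rp" "m' = pcomp ?L ?R m0"
      "\<exists>c d. lp = replicate d c" "\<exists>c d. rp = replicate d c"
      "m0 \<noteq> [] \<longrightarrow> (X @ lp = [] \<or> last (X @ lp) \<notin> ?L \<or> hd m0 \<notin> ?R)
                    \<and> (rp @ Y = [] \<or> last m0 \<notin> ?L \<or> hd (rp @ Y) \<notin> ?R)"
    by blast
  have split: "Tlev rk T (Suc h) = pcomp ?L ?R (X @ lp) @ m' @ pcomp ?L ?R (rp @ Y)" if "m0 \<noteq> []"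
    using False T m0 that pcomp_append3[of m0 "X @ lp" ?L ?R "rp @ Y"] by (simp add: Tlev_Suc_odd)
  show ?thesis
  proof (rule exI[of _ m0], intro conjI impI)
    assume "m' \<noteq> []"
    then have "m0 \<noteq> []" by (simp add: m0(2))
    with split show "\<exists>X' Y'. Tlev rk T (Suc h) = X' @ m' @ Y' \<and> slen_list X' = slen_list X + slen_list lp"
      by (intro exI[of _ "pcomp ?L ?R (X @ lp)"] exI[of _ "pcomp ?L ?R (rp @ Y)"]) simp
  qed (use m0 length_pcomp_le[of ?L ?R m0] in simp_all)
qed

lemma pop_rest_substring:
  "Tlev rk T h = X @ m @ Y \<Longrightarrow> pop_rest rk T h m f \<noteq> [] \<Longrightarrow>
     \<exists>X' Y'. Tlev rk T (h + f) = X' @ pop_rest rk T h m f @ Y'"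
proof (induction f arbitrary: h m X Y)
  case 0
  then have "Tlev rk T (h + 0) = X @ pop_rest rk T h m 0 @ Y" by simp
  then show ?case by blast
next
  case (Suc f)
  obtain lp m' rp where st: "pop_step rk T h m = (lp, m', rp)" by (cases "pop_step rk T h m") auto
  have "m' \<noteq> []" using Suc.prems(2) st by auto
  then obtain X' Y' where "Tlev rk T (Suc h) = X' @ m' @ Y'"
    using pop_step_split[OF Suc.prems(1) st] by blast
  from Suc.IH[OF this] show ?case using Suc.prems(2) by (simp add: st)
qed

lemma length_pop_rest_le: "Tlev rk T h = X @ m @ Y \<Longrightarrow> length (pop_rest rk T h m f) \<le> length m"
proof (induction f arbitrary: h m X Y)
  case (Suc f)
  obtain lp m' rp where st: "pop_step rk T h m = (lp, m', rp)" by (cases "pop_step rk T h m") auto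
  obtain m0 where m0: "m = lp @ m0 @ rp" "length m' \<le> length m0"
     "m' \<noteq> [] \<longrightarrow> (\<exists>X' Y'. Tlev rk T (Suc h) = X' @ m' @ Y' \<and> slen_list X' = slen_list X + slen_list lp)"
    using pop_step_split[OF Suc.prems st] by blast
  show ?case
  proof (cases "m' = []")
    case False
    then obtain X' Y' where "Tlev rk T (Suc h) = X' @ m' @ Y'" using m0(3) by blast
    moreover have "length m0 \<le> length m" using m0(1) by simp
    ultimately show ?thesis using Suc.IH m0(2) st by fastforce
  qed (simp add: st)
qed simp

lemma pop_step_odd_shrinks:
  assumes "Tlev rk T h = X @ m @ Y" "odd h" "m \<noteq> []"
  shows "length (fst (snd (pop_step rk T h m))) < length m"
proof -
  let ?L = "Lset rk T h" and ?R = "Rset rk T h"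
  obtain lp m' rp where po: "pop_odd ?L ?R m = (lp, m', rp)" by (cases "pop_odd ?L ?R m")
  have "set m \<subseteq> ?L \<union> ?R" using assms(1) Lset_Rset_partition[of rk T h] by auto
  then have "length m' < length m"
    using pop_odd_shrinks[OF _ _ assms(3) po] Lset_Rset_partition by blast
  then show ?thesis using po assms(2) by (simp add: pop_step_def)
qed

lemma length_pop_rest_two_less:
  assumes T: "Tlev rk T h = X @ m @ Y" and "even h" "m \<noteq> []"
  shows "length (pop_rest rk T h m 2) < length m"
proof -
  let ?m1 = "pop_rest rk T h m 1"
  have two: "pop_rest rk T h m 2 = pop_rest rk T (Suc h) ?m1 1"
    using pop_rest_add[of rk T h m 1 1] by (simp add: numeral_2_eq_2)
  show ?thesis
  proof (cases "?m1 = []")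
    case False
    then obtain X' Y' where "Tlev rk T (Suc h) = X' @ ?m1 @ Y'"
      using pop_rest_substring[OF T, of 1] by auto
    from pop_step_odd_shrinks[OF this _ False] assms(2)
    have "length (pop_rest rk T (Suc h) ?m1 1) < length ?m1" by simp
    then show ?thesis unfolding two using length_pop_rest_le[OF T, of 1] by linarith
  qed (use two assms(3) in simp)
qed

lemma pop_rest_eventually_Nil:
  "Tlev rk T h = X @ m @ Y \<Longrightarrow> even h \<Longrightarrow> pop_rest rk T h m (2 * length m) = []"
proof (induction "length m" arbitrary: h m X Y rule: less_induct)
  case less
  show ?case
  proof (cases "m = []")
    case False
    let ?m2 = "pop_rest rk T h m 2"
    have lt: "length ?m2 < length m" using length_pop_rest_two_less[OF less.prems False] .
    have "pop_rest rk T h m (2 * length m) = pop_rest rk T (h + 2) ?m2 (2 * length m - 2)"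
      using pop_rest_add[of rk T h m 2 "2 * length m - 2"] False by (cases m) auto
    also have "\<dots> = []"
    proof (cases "?m2 = []")
      case False
      then obtain X' Y' where "Tlev rk T (h + 2) = X' @ ?m2 @ Y'"
        using pop_rest_substring[OF less.prems(1), of 2] by auto
      with less.hyps[OF lt] less.prems(2)
      have "pop_rest rk T (h + 2) ?m2 (2 * length ?m2) = []" by simp
      then show ?thesis by (rule pop_rest_eq_Nil_mono) (use lt in simp)
    qed simp
    finally show ?thesis .
  qed simp
qed

section \<open>Chains of derivation tree nodes\<close>

lemma mem_nodes_iff:
  "n \<in> nodes rk T \<longleftrightarrow> (\<exists>h j. j < length (Tlev rk T h) \<and>
     n = (Tlev rk T h ! j, slen_list (take j (Tlev rk T h)),
          slen_list (take j (Tlev rk T h)) + slen (Tlev rk T h ! j)))"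
  unfolding nodes_def slen_list_def by blast

lemma node_in_level: "Tlev rk T h = X @ x # Z \<Longrightarrow> (x, slen_list X, slen_list X + slen x) \<in> nodes rk T"
  unfolding mem_nodes_iff by (intro exI[of _ h] exI[of _ "length X"]) simp

lemma node_end: "n \<in> nodes rk T \<Longrightarrow> snd (snd n) = fst (snd n) + slen (fst n)"
  unfolding mem_nodes_iff by auto

lemma expand_node:
  assumes "n \<in> nodes rk T"
  shows "expand (fst n) = take (slen (fst n)) (drop (fst (snd n)) (T0 T T))
    \<and> fst (snd n) + slen (fst n) \<le> length (T0 T T)"
proof -
  obtain h j where j: "j < length (Tlev rk T h)"
    and n: "n = (Tlev rk T h ! j, slen_list (take j (Tlev rk T h)),
                 slen_list (take j (Tlev rk T h)) + slen (Tlev rk T h ! j))"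
    using assms unfolding mem_nodes_iff by blast
  let ?s = "Tlev rk T h"
  have "?s = take j ?s @ [?s ! j] @ drop (Suc j) ?s" using j by (simp add: id_take_nth_drop)
  then have "T0 T T = expand_list (take j ?s) @ expand (?s ! j) @ expand_list (drop (Suc j) ?s)"
    using expand_list_Tlev[of rk T h] by (metis expand_list_append expand_list_Cons expand_list_Nil append_Nil2)
  then show ?thesis
    using n by (simp add: slen_list_eq_length_expand_list length_expand[symmetric])
qed

fun chain_from :: "(sym \<times> nat \<times> nat) list \<Rightarrow> nat \<Rightarrow> bool" where
  "chain_from [] i = True"
| "chain_from (n # ns) i \<longleftrightarrow> fst (snd n) = i \<and> chain_from ns (snd (snd n))"

text \<open>Occurrence of a possibly empty sequence of letters; \<open>occurs_seq\<close> additionally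
  requires the sequence to be nonempty.\<close>
definition chain_at :: "(sym \<Rightarrow> nat) \<Rightarrow> 'a::linorder list \<Rightarrow> sym list \<Rightarrow> nat \<Rightarrow> bool" where
  "chain_at rk T p i \<longleftrightarrow> (\<exists>ns. set ns \<subseteq> nodes rk T \<and> map fst ns = p \<and> chain_from ns i)"

lemma chain_at_Nil [simp]: "chain_at rk T [] i"
  by (auto simp: chain_at_def)

lemma chain_at_Cons_iff:
  "chain_at rk T (x # p) i \<longleftrightarrow> (x, i, i + slen x) \<in> nodes rk T \<and> chain_at rk T p (i + slen x)"
proof
  assume "chain_at rk T (x # p) i"
  then obtain n ns where ns: "set (n # ns) \<subseteq> nodes rk T" "map fst (n # ns) = x # p" "chain_from (n # ns) i"
    unfolding chain_at_def by (metis list.map_disc_iff neq_Nil_conv)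
  then have "n \<in> nodes rk T" by simp
  then have "snd (snd n) = fst (snd n) + slen (fst n)" by (rule node_end)
  then have "n = (x, i, i + slen x)" using ns by (cases n) auto
  then show "(x, i, i + slen x) \<in> nodes rk T \<and> chain_at rk T p (i + slen x)"
    using ns unfolding chain_at_def by auto
next
  assume "(x, i, i + slen x) \<in> nodes rk T \<and> chain_at rk T p (i + slen x)"
  then show "chain_at rk T (x # p) i"
    unfolding chain_at_def by (metis (no_types) chain_from.simps(2) fst_conv snd_conv
        insert_subset list.simps(15) list.simps(9))
qed

lemma chain_at_append:
  "chain_at rk T p i \<Longrightarrow> chain_at rk T q (i + slen_list p) \<Longrightarrow> chain_at rk T (p @ q) i"
  by (induction p arbitrary: i) (auto simp: chain_at_Cons_iff add.assoc)

lemma chain_at_level: "Tlev rk T h = X @ p @ Z \<Longrightarrow> chain_at rk T p (slen_list X)"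
proof (induction p arbitrary: X)
  case (Cons x p)
  have "(x, slen_list X, slen_list X + slen x) \<in> nodes rk T"
    using node_in_level[of rk T h X x "p @ Z"] Cons.prems by simp
  moreover have "chain_at rk T p (slen_list (X @ [x]))" using Cons.IH[of "X @ [x]"] Cons.prems by simp
  ultimately show ?case by (simp add: chain_at_Cons_iff)
qed simp

lemma expand_list_chain_at:
  "chain_at rk T p i \<Longrightarrow> p \<noteq> [] \<Longrightarrow>
     expand_list p = take (slen_list p) (drop i (T0 T T)) \<and> i + slen_list p \<le> length (T0 T T)"
proof (induction p arbitrary: i)
  case (Cons x p)
  then have n: "(x, i, i + slen x) \<in> nodes rk T" "chain_at rk T p (i + slen x)"
    by (simp_all add: chain_at_Cons_iff)
  have x: "expand x = take (slen x) (drop i (T0 T T))" "i + slen x \<le> length (T0 T T)"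
    using expand_node[OF n(1)] by auto
  have p: "expand_list p = take (slen_list p) (drop (i + slen x) (T0 T T))
      \<and> i + slen x + slen_list p \<le> length (T0 T T)"
  proof (cases "p = []")
    case False
    with Cons.IH[OF n(2)] show ?thesis by auto
  qed (use x(2) in simp_all)
  have "take (slen x + slen_list p) (drop i (T0 T T))
      = take (slen x) (drop i (T0 T T)) @ take (slen_list p) (drop (slen x) (drop i (T0 T T)))"
    by (rule take_add)
  then show ?case using x p by (simp add: add.commute)
qed simp

lemma chain_from_is_chain:
  "chain_from ns i \<Longrightarrow> is_chain ns \<and> (ns \<noteq> [] \<longrightarrow> fst (snd (hd ns)) = i)"
proof (induction ns arbitrary: i)
  case (Cons n ns)
  then have IH: "is_chain ns" "ns \<noteq> [] \<Longrightarrow> fst (snd (hd ns)) = snd (snd n)" by auto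
  have "is_chain (n # ns)" unfolding is_chain_def
  proof (intro allI impI)
    fix k assume "Suc k < length (n # ns)"
    with IH show "snd (snd ((n # ns) ! k)) = fst (snd ((n # ns) ! Suc k))"
      by (cases k) (auto simp: is_chain_def hd_conv_nth)
  qed
  then show ?case using Cons.prems by simp
qed (simp add: is_chain_def)

lemma is_chain_chain_from: "is_chain ns \<Longrightarrow> ns \<noteq> [] \<Longrightarrow> chain_from ns (fst (snd (hd ns)))"
proof (induction ns)
  case (Cons n ns)
  show ?case
  proof (cases ns)
    case (Cons n' ns')
    have "is_chain ns" using Cons.prems(1) unfolding is_chain_def
      by (metis Suc_less_eq length_Cons nth_Cons_Suc)
    moreover have "snd (snd n) = fst (snd n')" using Cons.prems(1) Cons unfolding is_chain_def
      by (metis length_Cons nth_Cons_0 nth_Cons_Suc zero_less_Suc Suc_less_eq)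
    ultimately show ?thesis using Cons.IH Cons by simp
  qed simp
qed simp

lemma occurs_seq_iff_chain_at: "occurs_seq rk T p i \<longleftrightarrow> p \<noteq> [] \<and> chain_at rk T p i"
proof
  assume "occurs_seq rk T p i"
  then obtain ns where "ns \<noteq> []" "set ns \<subseteq> nodes rk T" "is_chain ns" "map fst ns = p" "fst (snd (hd ns)) = i"
    unfolding occurs_seq_def by blast
  then show "p \<noteq> [] \<and> chain_at rk T p i"
    unfolding chain_at_def using is_chain_chain_from by auto
next
  assume "p \<noteq> [] \<and> chain_at rk T p i"
  then obtain ns where "p \<noteq> []" "set ns \<subseteq> nodes rk T" "map fst ns = p" "chain_from ns i"
    unfolding chain_at_def by blast
  then show "occurs_seq rk T p i"
    unfolding occurs_seq_def using chain_from_is_chain by auto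
qed

section \<open>The popped sequence\<close>

lemma pops_chain_at:
  "Tlev rk T h = X @ m @ Y \<Longrightarrow> pops rk T h m f = (l, r) \<Longrightarrow>
     chain_at rk T (l @ pop_rest rk T h m f @ r) (slen_list X)
     \<and> expand_list (l @ pop_rest rk T h m f @ r) = expand_list m"
proof (induction f arbitrary: h m X Y l r)
  case 0
  then show ?case using chain_at_level[OF 0(1)] by simp
next
  case (Suc f)
  obtain lp m' rp where st: "pop_step rk T h m = (lp, m', rp)" by (cases "pop_step rk T h m") auto
  obtain l' r' where pops: "pops rk T (Suc h) m' f = (l', r')" by (cases "pops rk T (Suc h) m' f") auto
  have lr: "l = lp @ l'" "r = r' @ rp"
    using Suc.prems(2) by (simp_all add: pops_Suc st pops)
  have rest: "pop_rest rk T h m (Suc f) = pop_rest rk T (Suc h) m' f" using st by simp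
  obtain m0 where m0: "m = lp @ m0 @ rp" "expand_list m' = expand_list m0" "m' = [] \<longleftrightarrow> m0 = []"
      "m' \<noteq> [] \<longrightarrow> (\<exists>X' Y'. Tlev rk T (Suc h) = X' @ m' @ Y' \<and> slen_list X' = slen_list X + slen_list lp)"
    using pop_step_split[OF Suc.prems(1) st] by blast
  let ?q = "l' @ pop_rest rk T (Suc h) m' f @ r'"
  have q: "chain_at rk T ?q (slen_list X + slen_list lp) \<and> expand_list ?q = expand_list m0"
  proof (cases "m' = []")
    case True
    then show ?thesis using pops m0(3) by simp
  next
    case False
    then obtain X' Y' where "Tlev rk T (Suc h) = X' @ m' @ Y'" "slen_list X' = slen_list X + slen_list lp"
      using m0(4) by blast
    with Suc.IH[OF this(1) pops] show ?thesis using m0(2) by simp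
  qed
  have lp: "chain_at rk T lp (slen_list X)" and rp: "chain_at rk T rp (slen_list (X @ lp @ m0))"
    using chain_at_level[of rk T h X lp "m0 @ rp @ Y"] chain_at_level[of rk T h "X @ lp @ m0" rp Y]
      Suc.prems(1) m0(1) by simp_all
  have "slen_list ?q = slen_list m0"
    using q by (simp add: slen_list_eq_length_expand_list)
  then have "chain_at rk T (lp @ ?q @ rp) (slen_list X)"
    using q rp by (intro chain_at_append[OF lp] chain_at_append[of rk T ?q]) (simp_all add: add.assoc)
  moreover have "expand_list (lp @ ?q @ rp) = expand_list m" using q m0(1) by simp
  ultimately show ?case unfolding lr rest by simp
qed

text \<open>Each level pops at most one run on either side.\<close>
lemma length_runs_pops:
  "Tlev rk T h = X @ m @ Y \<Longrightarrow> pops rk T h m f = (l, r) \<Longrightarrow> pop_rest rk T h m g = [] \<Longrightarrow>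
     length (runs (l @ r)) \<le> 2 * g"
proof (induction f arbitrary: h m X Y l r g)
  case (Suc f)
  obtain lp m' rp where st: "pop_step rk T h m = (lp, m', rp)" by (cases "pop_step rk T h m") auto
  obtain l' r' where pops: "pops rk T (Suc h) m' f = (l', r')" by (cases "pops rk T (Suc h) m' f") auto
  have lr: "l = lp @ l'" "r = r' @ rp"
    using Suc.prems(2) by (simp_all add: pops_Suc st pops)
  obtain m0 where m0: "\<exists>c d. lp = replicate d c" "\<exists>c d. rp = replicate d c"
      "m' \<noteq> [] \<longrightarrow> (\<exists>X' Y'. Tlev rk T (Suc h) = X' @ m' @ Y' \<and> slen_list X' = slen_list X + slen_list lp)"
    using pop_step_split[OF Suc.prems(1) st] by blast
  show ?case
  proof (cases g)
    case 0
    then show ?thesis using Suc.prems by simp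
  next
    case (Suc g')
    have "length (runs (l' @ r')) \<le> 2 * g'"
    proof (cases "m' = []")
      case False
      then obtain X' Y' where "Tlev rk T (Suc h) = X' @ m' @ Y'" using m0(3) by blast
      then show ?thesis
        using Suc.IH pops Suc.prems(3) st \<open>g = Suc g'\<close> by simp
    qed (use pops in simp)
    moreover have "length (runs lp) \<le> 1" "length (runs rp) \<le> 1"
      using m0(1,2) length_runs_replicate_le by auto
    moreover have "length (runs (lp @ (l' @ r') @ rp))
        \<le> length (runs lp) + (length (runs (l' @ r')) + length (runs rp))"
      using length_runs_append_le[of lp "(l' @ r') @ rp"] length_runs_append_le[of "l' @ r'" rp] by simp
    ultimately show ?thesis using lr \<open>g = Suc g'\<close> by simp
  qed
qed simp

lemma T0_take_drop: "T0 T (take n (drop i u)) = take n (drop i (T0 T u))"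
  by (simp add: T0_def take_map drop_map)

lemma char_rank_strict_mono:
  "x \<in> set T \<Longrightarrow> y \<in> set T \<Longrightarrow> x < y \<Longrightarrow> char_rank T x < char_rank T y"
  unfolding char_rank_def by (intro psubset_card_mono) auto

lemma T0_inj:
  assumes "set u \<subseteq> set T" "set v \<subseteq> set T" "T0 T u = T0 T v"
  shows "u = v"
proof -
  have "inj_on (\<lambda>c. Term (char_rank T c)) (set T)"
    by (rule inj_onI) (metis char_rank_strict_mono less_irrefl neq_iff sym.inject(1))
  then show ?thesis
    using assms map_inj_on[of "\<lambda>c. Term (char_rank T c)" u v] unfolding T0_def
    by (meson inj_on_subset le_sup_iff)
qed

lemma Tlev_0_at_occurrence:
  assumes "occurs_str T w i"
  shows "Tlev rk T 0 = T0 T (take i T) @ T0 T w @ T0 T (drop (i + length w) T)"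
proof -
  have "i + length w \<le> length T" "take (length w) (drop i T) = w"
    using assms by (auto simp: occurs_str_def)
  then have "T = take i T @ w @ drop (i + length w) T"
    by (metis append_take_drop_id drop_drop add.commute)
  then show ?thesis by (metis T0_append Tlev.simps(1))
qed

text \<open>The constant \<open>4 * length T + 4\<close> in \<open>PSeq\<close> exceeds \<open>2 * length w\<close>, so the
  process has consumed all of \<open>w\<close>.\<close>
lemma PSeq_chain_at:
  assumes "occurs_str T w i"
  shows "chain_at rk T (PSeq rk T w) i \<and> expand_list (PSeq rk T w) = T0 T w"
proof -
  let ?F = "4 * length T + 4"
  obtain l r where pops: "pops rk T 0 (T0 T w) ?F = (l, r)" by force
  note T = Tlev_0_at_occurrence[OF assms, of rk]
  have "pop_rest rk T 0 (T0 T w) (2 * length (T0 T w)) = []"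
    using pop_rest_eventually_Nil[OF T] by simp
  moreover have "2 * length (T0 T w) \<le> ?F"
    using assms by (simp add: occurs_str_def)
  ultimately have "pop_rest rk T 0 (T0 T w) ?F = []" by (rule pop_rest_eq_Nil_mono)
  moreover have "slen_list (T0 T (take i T)) = i"
    using assms by (simp add: occurs_str_def)
  ultimately show ?thesis
    using pops_chain_at[OF T pops] pops by (simp add: PSeq_def)
qed

lemma occurs_str_iff_occurs_seq_PSeq:
  assumes "occurs_str T w b" "w \<noteq> []"
  shows "occurs_str T w i \<longleftrightarrow> occurs_seq rk T (PSeq rk T w) i"
proof
  assume "occurs_str T w i"
  note PSeq = PSeq_chain_at[OF this, of rk]
  then have "PSeq rk T w \<noteq> []" using assms(2) by (auto simp: T0_def)
  with PSeq show "occurs_seq rk T (PSeq rk T w) i" by (simp add: occurs_seq_iff_chain_at)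
next
  assume "occurs_seq rk T (PSeq rk T w) i"
  then have "PSeq rk T w \<noteq> []" "chain_at rk T (PSeq rk T w) i"
    by (simp_all add: occurs_seq_iff_chain_at)
  from expand_list_chain_at[OF this(2,1)]
  have "T0 T w = take (length w) (drop i (T0 T T))" "i + length w \<le> length T"
    using PSeq_chain_at[OF assms(1), of rk] by (simp_all add: slen_list_eq_length_expand_list)
  moreover have "set w \<subseteq> set T" "set (take (length w) (drop i T)) \<subseteq> set T"
    using assms(1) unfolding occurs_str_def by (metis set_drop_subset set_take_subset order.trans)+
  ultimately show "occurs_str T w i"
    unfolding occurs_str_def using T0_inj T0_take_drop by metis
qed

lemma length_runs_PSeq:
  assumes "occurs_str T w b" "w \<noteq> []"
  shows "real (length (runs (PSeq rk T w))) \<le> 16 * (1 + log 2 (real (length T)))"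
proof -
  have "T \<noteq> []" using assms by (auto simp: occurs_str_def)
  then obtain k where k: "length T \<le> 2 ^ k" "real k \<le> log 2 (real (length T)) + 1"
    using exists_pow2_bound[of "length T"] by (auto simp: Suc_le_eq)
  note T = Tlev_0_at_occurrence[OF assms(1), of rk]
  let ?m = "pop_rest rk T 0 (T0 T w) (6 * k)"
  have "pop_rest rk T 0 (T0 T w) (6 * k + 2) = pop_rest rk T (6 * k) ?m 2"
    using pop_rest_add[of rk T 0 "T0 T w" "6 * k" 2] by simp
  also have "\<dots> = []"
  proof (cases "?m = []")
    case False
    then obtain X' Y' where T': "Tlev rk T (6 * k) = X' @ ?m @ Y'"
      using pop_rest_substring[OF T, of "6 * k"] by auto
    then have "length ?m \<le> 1"
      using Tlev_length_le_1[OF \<open>T \<noteq> []\<close> k(1), of rk] by simp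
    moreover have "length (pop_rest rk T (6 * k) ?m 2) < length ?m"
      using length_pop_rest_two_less[OF T' _ False] by simp
    ultimately have "length (pop_rest rk T (6 * k) ?m 2) = 0" by linarith
    then show ?thesis by simp
  qed simp
  finally have rest: "pop_rest rk T 0 (T0 T w) (6 * k + 2) = []" .
  obtain l r where pops: "pops rk T 0 (T0 T w) (4 * length T + 4) = (l, r)" by force
  have "length (runs (PSeq rk T w)) \<le> 2 * (6 * k + 2)"
    using length_runs_pops[OF T pops rest] pops by (simp add: PSeq_def)
  then have "real (length (runs (PSeq rk T w))) \<le> 12 * real k + 4"
    by simp
  moreover have "0 \<le> log 2 (real (length T))" using \<open>T \<noteq> []\<close> by (simp add: Suc_le_eq)
  ultimately show ?thesis using k(2) unfolding distrib_left by linarith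
qed

theorem lemma11:
  shows "\<exists>C::real. \<forall>(rk :: sym \<Rightarrow> nat) (T :: 'a::linorder list) b e.
     inj rk \<and> (\<forall>m n. m < n \<longrightarrow> rk (Term m) < rk (Term n)) \<and> b \<le> e \<and> e < length T \<longrightarrow>
     (let w = take (Suc e - b) (drop b T) in
        real (length (runs (PSeq rk T w))) \<le> C * (1 + log 2 (real (length T))) \<and>
        (\<forall>i. occurs_str T w i \<longleftrightarrow> occurs_seq rk T (PSeq rk T w) i))"
proof (intro exI[of _ 16] allI impI)
  fix rk :: "sym \<Rightarrow> nat" and T :: "'a list" and b e
  assume "inj rk \<and> (\<forall>m n. m < n \<longrightarrow> rk (Term m) < rk (Term n)) \<and> b \<le> e \<and> e < length T"
  then have "b \<le> e" "e < length T" by simp_all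
  define w where "w = take (Suc e - b) (drop b T)"
  have occ: "occurs_str T w b" and "w \<noteq> []"
    using \<open>b \<le> e\<close> \<open>e < length T\<close> by (auto simp: occurs_str_def w_def)
  show "let w = take (Suc e - b) (drop b T) in
      real (length (runs (PSeq rk T w))) \<le> 16 * (1 + log 2 (real (length T))) \<and>
      (\<forall>i. occurs_str T w i \<longleftrightarrow> occurs_seq rk T (PSeq rk T w) i)"
    unfolding Let_def w_def[symmetric]
    using length_runs_PSeq[OF occ \<open>w \<noteq> []\<close>] occurs_str_iff_occurs_seq_PSeq[OF occ \<open>w \<noteq> []\<close>]
    by blast
qed

end
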